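(* Let $m\neq 0$ and $k$ be real constants, let $\mathbf{q}_0,\mathbf{p}_0\in\mathbb{R}^3$ with $\mathbf{q}_0\neq 0$, and let $h_0>0$. Run the numerical scheme described in the context and assume that all quantities it produces are well defined for every $n\ge 0$ (all denominators nonzero). Then the discrete angular momentum $\mathbf L_n=\mathbf q_n\times\mathbf p_n$ is independent of $n$: $\mathbf L_n=\mathbf q_0\times\mathbf p_0$ for all $n\ge 0$.
   Context: The scheme is a discretization of the Kepler problem $\dot{\mathbf p}=-k\mathbf q/|\mathbf q|^3$, $\mathbf p=m\dot{\mathbf q}$ in $\mathbb{R}^3$. For a vector $\mathbf v$ write $v=|\mathbf v|$. Initialization: put $q_0=|\mathbf q_0|$, $$S_0=\frac{h_0\,\mathbf q_0\cdot\mathbf p_0}{m\,q_0},\qquad \mathbf r_0=\mathbf q_0+\frac{h_0}{2m}\Big(\frac{S_0}{q_0+\sqrt{q_0^2+S_0^2}}-1\Big)\mathbf p_0,\qquad \mathbf r_1=\mathbf r_0+\frac{h_0\mathbf p_0}{m},$$ and let $\delta\in[0,\pi/2)$ be defined by $\cos 2\delta=\dfrac{r_0^2+\mathbf r_0\cdot\mathbf P_0}{r_0\sqrt{r_0^2+2\mathbf r_0\cdot\mathbf P_0+\mathbf P_0^2}}$, where $\mathbf P_0=h_0\mathbf p_0/m$ (equivalently $\cos2\delta=\mathbf r_0\cdot\mathbf r_1/(r_0r_1)$). Iteration: for $n=0,1,2,\dots$, given $\mathbf r_n,\mathbf r_{n+1},\mathbf p_n,h_n$, define $$\mathbf p_{n+1}=\mathbf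 p_n-\frac{k h_n\,\mathbf r_{n+1}}{r_{n+1}^2 r_n\cos\delta},\qquad h_{n+1}=\frac{h_n}{\dfrac{2r_n\cos2\delta}{r_{n+1}}-1+\dfrac{k h_n^2}{m\,r_{n+1}^2 r_n\cos\delta}},$$ $$\mathbf r_{n+2}=\mathbf r_{n+1}+\frac{h_{n+1}\mathbf p_{n+1}}{m},\qquad \mathbf q_{n+1}=\frac{r_{n+2}\mathbf r_{n+1}+r_{n+1}\mathbf r_{n+2}}{r_{n+1}+r_{n+2}} .$$ The initial $\mathbf q_0$ is the given one. *)

theory Defs
  imports "HOL-Analysis.Analysis" "HOL-Analysis.Cross3"
begin

definition kS0 :: "real \<Rightarrow> real^3 \<Rightarrow> real^3 \<Rightarrow> real \<Rightarrow> real" where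
  "kS0 m q0 p0 h0 = h0 * (q0 \<bullet> p0) / (m * norm q0)"

definition kr0 :: "real \<Rightarrow> real^3 \<Rightarrow> real^3 \<Rightarrow> real \<Rightarrow> real^3" where
  "kr0 m q0 p0 h0 = q0 + (h0 / (2 * m) *
      (kS0 m q0 p0 h0 / (norm q0 + sqrt ((norm q0)\<^sup>2 + (kS0 m q0 p0 h0)\<^sup>2)) - 1)) *\<^sub>R p0"

definition kr1 :: "real \<Rightarrow> real^3 \<Rightarrow> real^3 \<Rightarrow> real \<Rightarrow> real^3" where
  "kr1 m q0 p0 h0 = kr0 m q0 p0 h0 + (h0 / m) *\<^sub>R p0"

definition kdelta :: "real \<Rightarrow> real^3 \<Rightarrow> real^3 \<Rightarrow> real \<Rightarrow> real" where
  "kdelta m q0 p0 h0 = arccos ((kr0 m q0 p0 h0 \<bullet> kr1 m q0 p0 h0)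
      / (norm (kr0 m q0 p0 h0) * norm (kr1 m q0 p0 h0))) / 2"

definition kD :: "real \<Rightarrow> real \<Rightarrow> real \<Rightarrow> real^3 \<Rightarrow> real^3 \<Rightarrow> real \<Rightarrow> real" where
  "kD m k d ra rb h = 2 * norm ra * cos (2 * d) / norm rb - 1
      + k * h\<^sup>2 / (m * (norm rb)\<^sup>2 * norm ra * cos d)"

text \<open>State at step n: (r_n, r_(n+1), p_n, h_n).\<close>
fun kstate :: "real \<Rightarrow> real \<Rightarrow> real^3 \<Rightarrow> real^3 \<Rightarrow> real \<Rightarrow> nat \<Rightarrow> (real^3) * (real^3) * (real^3) * real" where
  "kstate m k q0 p0 h0 0 = (kr0 m q0 p0 h0, kr1 m q0 p0 h0, p0, h0)"
| "kstate m k q0 p0 h0 (Suc n) =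
     (let (ra, rb, p, h) = kstate m k q0 p0 h0 n;
          d = kdelta m q0 p0 h0;
          p' = p - (k * h / ((norm rb)\<^sup>2 * norm ra * cos d)) *\<^sub>R rb;
          h' = h / kD m k d ra rb h;
          rc = rb + (h' / m) *\<^sub>R p'
      in (rb, rc, p', h'))"

definition kr :: "real \<Rightarrow> real \<Rightarrow> real^3 \<Rightarrow> real^3 \<Rightarrow> real \<Rightarrow> nat \<Rightarrow> real^3" where
  "kr m k q0 p0 h0 n = fst (kstate m k q0 p0 h0 n)"

definition kp :: "real \<Rightarrow> real \<Rightarrow> real^3 \<Rightarrow> real^3 \<Rightarrow> real \<Rightarrow> nat \<Rightarrow> real^3" where
  "kp m k q0 p0 h0 n = fst (snd (snd (kstate m k q0 p0 h0 n)))"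

definition kh :: "real \<Rightarrow> real \<Rightarrow> real^3 \<Rightarrow> real^3 \<Rightarrow> real \<Rightarrow> nat \<Rightarrow> real" where
  "kh m k q0 p0 h0 n = snd (snd (snd (kstate m k q0 p0 h0 n)))"

fun kq :: "real \<Rightarrow> real \<Rightarrow> real^3 \<Rightarrow> real^3 \<Rightarrow> real \<Rightarrow> nat \<Rightarrow> real^3" where
  "kq m k q0 p0 h0 0 = q0"
| "kq m k q0 p0 h0 (Suc n) =
     (let ra = kr m k q0 p0 h0 (Suc n); rb = kr m k q0 p0 h0 (Suc (Suc n))
      in (1 / (norm ra + norm rb)) *\<^sub>R (norm rb *\<^sub>R ra + norm ra *\<^sub>R rb))"

definition kwelldef :: "real \<Rightarrow> real \<Rightarrow> real^3 \<Rightarrow> real^3 \<Rightarrow> real \<Rightarrow> bool" where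
  "kwelldef m k q0 p0 h0 \<longleftrightarrow>
     norm q0 + sqrt ((norm q0)\<^sup>2 + (kS0 m q0 p0 h0)\<^sup>2) \<noteq> 0 \<and>
     cos (kdelta m q0 p0 h0) \<noteq> 0 \<and>
     (\<forall>n. norm (kr m k q0 p0 h0 n) \<noteq> 0 \<and>
          kD m k (kdelta m q0 p0 h0) (kr m k q0 p0 h0 n) (kr m k q0 p0 h0 (Suc n)) (kh m k q0 p0 h0 n) \<noteq> 0 \<and>
          norm (kr m k q0 p0 h0 (Suc n)) + norm (kr m k q0 p0 h0 (Suc (Suc n))) \<noteq> 0)"

end

theory Submission
  imports Defs
begin

text \<open>Every update of the scheme is a shear: r is moved along p, and p is moved along the
  new r. Such shears leave the cross product of r and p unchanged, so r_n \<times> p_n is constant,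
  and r_(n+1) \<times> p_n takes the same value. Since q_(n+1) is a weighted mean of r_(n+1) and
  r_(n+2), its cross product with p_(n+1) is that constant as well. Only the shear structure
  matters, not the coefficients, so of the hypotheses only |r_(n+1)| + |r_(n+2)| \<noteq> 0 is
  used.\<close>

lemma cross3_add_scaleR_left: "cross3 (x + c *\<^sub>R y) y = cross3 x y"
  by (simp add: cross_add_left cross_mult_left)

lemma cross3_diff_scaleR_right: "cross3 x (y - c *\<^sub>R x) = cross3 x y"
  by (simp add: Cross3.right_diff_distrib cross_mult_right)

lemma cross3_weighted_mean_left:
  assumes "cross3 x z = w" and "cross3 y z = w" and "a + b \<noteq> 0"
  shows "cross3 ((1 / (a + b)) *\<^sub>R (a *\<^sub>R x + b *\<^sub>R y)) z = w"
proof -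
  have "cross3 ((1 / (a + b)) *\<^sub>R (a *\<^sub>R x + b *\<^sub>R y)) z
      = (1 / (a + b)) *\<^sub>R (a *\<^sub>R w + b *\<^sub>R w)"
    using assms(1,2) by (simp add: cross_add_left cross_mult_left)
  also have "\<dots> = w"
    using assms(3) by (simp add: scaleR_add_left[symmetric])
  finally show ?thesis .
qed

context
  fixes m k h0 :: real and q0 p0 :: "real^3"
begin

lemma kr_Suc:
  "kr m k q0 p0 h0 (Suc n) = kr m k q0 p0 h0 n + (kh m k q0 p0 h0 n / m) *\<^sub>R kp m k q0 p0 h0 n"
  by (cases n) (auto simp: kr_def kp_def kh_def kr1_def Let_def split: prod.splits)

lemma kp_Suc:
  "kp m k q0 p0 h0 (Suc n) = kp m k q0 p0 h0 n
     - (k * kh m k q0 p0 h0 n / ((norm (kr m k q0 p0 h0 (Suc n)))\<^sup>2 * norm (kr m k q0 p0 h0 n)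
          * cos (kdelta m q0 p0 h0))) *\<^sub>R kr m k q0 p0 h0 (Suc n)"
  by (auto simp: kr_def kp_def kh_def Let_def split: prod.splits)

lemma cross3_kr_kp: "cross3 (kr m k q0 p0 h0 n) (kp m k q0 p0 h0 n) = cross3 q0 p0"
proof (induction n)
  case 0
  show ?case
    by (simp add: kr_def kp_def kr0_def cross3_add_scaleR_left)
next
  case (Suc n)
  have "cross3 (kr m k q0 p0 h0 (Suc n)) (kp m k q0 p0 h0 (Suc n))
      = cross3 (kr m k q0 p0 h0 (Suc n)) (kp m k q0 p0 h0 n)"
    unfolding kp_Suc by (rule cross3_diff_scaleR_right)
  also have "\<dots> = cross3 (kr m k q0 p0 h0 n) (kp m k q0 p0 h0 n)"
    unfolding kr_Suc by (rule cross3_add_scaleR_left)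
  finally show ?case
    using Suc.IH by simp
qed

lemma cross3_kr_Suc_kp: "cross3 (kr m k q0 p0 h0 (Suc n)) (kp m k q0 p0 h0 n) = cross3 q0 p0"
  unfolding kr_Suc by (simp add: cross3_add_scaleR_left cross3_kr_kp)

end

theorem mainTheorem2:
  fixes m k h0 :: real and q0 p0 :: "real^3"
  assumes "m \<noteq> 0" and "q0 \<noteq> 0" and "h0 > 0"
    and "kwelldef m k q0 p0 h0"
  shows "\<forall>n. cross3 (kq m k q0 p0 h0 n) (kp m k q0 p0 h0 n) = cross3 q0 p0"
proof
  fix n
  show "cross3 (kq m k q0 p0 h0 n) (kp m k q0 p0 h0 n) = cross3 q0 p0"
  proof (cases n)
    case 0
    then show ?thesis
      by (simp add: kp_def)
  next
    case (Suc j)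
    let ?ra = "kr m k q0 p0 h0 (Suc j)" and ?rb = "kr m k q0 p0 h0 (Suc (Suc j))"
    have "kq m k q0 p0 h0 n = (1 / (norm ?rb + norm ?ra)) *\<^sub>R (norm ?rb *\<^sub>R ?ra + norm ?ra *\<^sub>R ?rb)"
      using Suc by (simp add: Let_def add.commute)
    moreover have "norm ?rb + norm ?ra \<noteq> 0"
      using assms(4) by (simp add: kwelldef_def add.commute)
    ultimately show ?thesis
      using Suc by (simp add: cross3_weighted_mean_left cross3_kr_kp cross3_kr_Suc_kp)
  qed
qed

end
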